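(* Assume $C^\top C\succ0$, and let $\gamma>0$, $\sigma>0$, $\lambda>0$. Let $(\widetilde W_r,y_r)_{r\ge0}$ be generated by the alternating scheme described in the context from a feasible initial point $\widetilde W_0\in\mathcal{X}_1$, $y_0\in\mathbb{R}^{mn}_+$. Then $H_\sigma(\widetilde W_{r+1})\le H_\sigma(\widetilde W_r)$ for all $r\ge0$.
   Context: Let $n,m,M\ge1$, $p=m+n$. For $i=1,\dots,M$ let $A_i\in\mathbb{R}^{n\times n}$, $B_{2,i}\in\mathbb{R}^{n\times m}$, $F_i=\begin{bmatrix}A_i&B_{2,i}\\0&0\end{bmatrix}$. Let $B_1\in\mathbb{R}^{n\times l}$, $C\in\mathbb{R}^{q\times n}$, $D\in\mathbb{R}^{q\times m}$ with $C^\top D=0$, $D^\top D\succ0$, $B_1B_1^\top\succ0$; $Q=\begin{bmatrix}B_1B_1^\top&0\\0&0\end{bmatrix}$, $R=\begin{bmatrix}C^\top C&0\\0&D^\top D\end{bmatrix}$, $V_1=[0,\ I_m]$, $V_2=[I_n,\ 0]$, $\Psi_i(W)=-V_2(F_iW+WF_i^\top+Q)V_2^\top$. $\mathrm{vec}$ is column-stacking; $\mathcal{P}:=V_2\otimes V_1$, so $\mathcal{P}\,\mathrm{vec}(W)=\mathrm{vec}(V_1WV_2^\top)\in\mathbb{R}^{mn}$. $\Gamma^k_+=\{\mathrm{vec}(X):X\in\mathbb{S}^k_+\}$, $\delta_S$ the indicator of $S$, $\Omega=\{\mathrm{vec}(W):W_{ij}=0,\ 1\le i<j\le n\}$, $\mathcal{X}_1=\{\mathrm{vec}(W)\in\Gamma^p_+:\mathrm{vec}(\Psi_i(W))\in\Gamma^n_+\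 \forall i,\ \mathrm{vec}(W)\in\Omega\}$, and $r_1(\widetilde W)=\langle\mathrm{vec}(R),\widetilde W\rangle+\delta_{\mathcal{X}_1}(\widetilde W)$. For $x\in\mathbb{R}^{mn}$, $f_\sigma(x)=\sum_\ell(1-e^{-x_\ell/\sigma})$, $g_\sigma=-f_\sigma$, $g_\sigma^*$ its convex conjugate; $|\cdot|$ is componentwise. $H_\sigma(\widetilde W)=r_1(\widetilde W)+\gamma f_\sigma(|\mathcal{P}\widetilde W|)$. Scheme: for $r=1,2,\dots$: if $r$ is odd, set $\widetilde W_r=\widetilde W_{r-1}$ and $y_r=\operatorname{argmin}_{y\in\mathbb{R}^{mn}_+}\{\gamma g_\sigma^*(-y)+\gamma y^\top|\mathcal{P}\widetilde W_{r-1}|\}=\nabla f_\sigma(|\mathcal{P}\widetilde W_{r-1}|)$; if $r$ is even, set $y_r=y_{r-1}$ and $\widetilde W_r\in\operatorname{argmin}_{\widetilde W\in\mathcal{X}_1}\{\langle\mathrm{vec}(R),\widetilde W\rangle+\gamma y_{r-1}^\top|\mathcal{P}\widetilde W|+\frac1{2\lambda}\|\widetilde W-\widetilde W_{r-1}\|^2\}$. *)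

theory Defs
  imports "HOL-Analysis.Analysis"
begin

text \<open>Real matrices are represented as functions nat => nat => real; only the
entries with indices below the stated dimensions are meaningful (0-based indices).\<close>

type_synonym rmat = "nat \<Rightarrow> nat \<Rightarrow> real"

definition mmul :: "nat \<Rightarrow> rmat \<Rightarrow> rmat \<Rightarrow> rmat" where
  "mmul k X Y = (\<lambda>i j. \<Sum>t<k. X i t * Y t j)"

definition mtr :: "rmat \<Rightarrow> rmat" where
  "mtr X = (\<lambda>i j. X j i)"

definition madd :: "rmat \<Rightarrow> rmat \<Rightarrow> rmat" where
  "madd X Y = (\<lambda>i j. X i j + Y i j)"

definition mneg :: "rmat \<Rightarrow> rmat" where
  "mneg X = (\<lambda>i j. - X i j)"

definition psd :: "nat \<Rightarrow> rmat \<Rightarrow> bool" where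
  "psd k X \<longleftrightarrow> (\<forall>i<k. \<forall>j<k. X i j = X j i) \<and>
     (\<forall>v::nat\<Rightarrow>real. 0 \<le> (\<Sum>i<k. \<Sum>j<k. v i * X i j * v j))"

definition pd :: "nat \<Rightarrow> rmat \<Rightarrow> bool" where
  "pd k X \<longleftrightarrow> (\<forall>i<k. \<forall>j<k. X i j = X j i) \<and>
     (\<forall>v::nat\<Rightarrow>real. (\<exists>i<k. v i \<noteq> 0) \<longrightarrow> 0 < (\<Sum>i<k. \<Sum>j<k. v i * X i j * v j))"

definition vecm :: "nat \<Rightarrow> rmat \<Rightarrow> nat \<Rightarrow> real" where
  "vecm r X = (\<lambda>l. X (l mod r) (l div r))"

text \<open>Block matrices F_i, Q, R and selectors V1 = [0, I_m] (m x p), V2 = [I_n, 0] (n x p).\<close>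
definition Fmat :: "nat \<Rightarrow> rmat \<Rightarrow> rmat \<Rightarrow> rmat" where
  "Fmat n A B2 = (\<lambda>a b. if a < n then (if b < n then A a b else B2 a (b - n)) else 0)"

definition Qmat :: "nat \<Rightarrow> nat \<Rightarrow> rmat \<Rightarrow> rmat" where
  "Qmat n l B1 = (\<lambda>a b. if a < n \<and> b < n then mmul l B1 (mtr B1) a b else 0)"

definition Rmat :: "nat \<Rightarrow> nat \<Rightarrow> rmat \<Rightarrow> rmat \<Rightarrow> rmat" where
  "Rmat n q C D = (\<lambda>a b. if a < n \<and> b < n then mmul q (mtr C) C a b
                        else if n \<le> a \<and> n \<le> b then mmul q (mtr D) D (a - n) (b - n)
                        else 0)"

definition V1 :: "nat \<Rightarrow> rmat" where
  "V1 n = (\<lambda>i j. if j = n + i then 1 else 0)"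

definition V2 :: rmat where
  "V2 = (\<lambda>i j. if i = j then 1 else 0)"

definition Psi :: "nat \<Rightarrow> nat \<Rightarrow> nat \<Rightarrow> rmat \<Rightarrow> rmat \<Rightarrow> rmat \<Rightarrow> rmat \<Rightarrow> rmat" where
  "Psi n m l A B2 B1 W =
     (let p = m + n; F = Fmat n A B2 in
      mneg (mmul p (mmul p V2 (madd (madd (mmul p F W) (mmul p W (mtr F))) (Qmat n l B1))) (mtr V2)))"

definition Pop :: "nat \<Rightarrow> nat \<Rightarrow> rmat \<Rightarrow> nat \<Rightarrow> real" where
  "Pop n m W = vecm m (mmul (m + n) (mmul (m + n) (V1 n) W) (mtr V2))"

text \<open>The feasible set X_1 (expressed on the matrix W rather than on vec(W)).\<close>
definition X1 :: "nat \<Rightarrow> nat \<Rightarrow> nat \<Rightarrow> nat \<Rightarrow> (nat \<Rightarrow> rmat) \<Rightarrow> (nat \<Rightarrow> rmat) \<Rightarrow> rmat \<Rightarrow> rmat set" where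
  "X1 n m M l A B2 B1 = {W. psd (m + n) W \<and>
      (\<forall>i\<in>{1..M}. psd n (Psi n m l (A i) (B2 i) B1 W)) \<and>
      (\<forall>i j. i < j \<and> j < n \<longrightarrow> W i j = 0)}"

definition frob_inner :: "nat \<Rightarrow> rmat \<Rightarrow> rmat \<Rightarrow> real" where
  "frob_inner p X Y = (\<Sum>a<p. \<Sum>b<p. X a b * Y a b)"

definition frob_sq :: "nat \<Rightarrow> rmat \<Rightarrow> real" where
  "frob_sq p X = (\<Sum>a<p. \<Sum>b<p. (X a b)\<^sup>2)"

definition fsig :: "real \<Rightarrow> nat \<Rightarrow> (nat \<Rightarrow> real) \<Rightarrow> real" where
  "fsig \<sigma> k x = (\<Sum>l<k. 1 - exp (- x l / \<sigma>))"

definition grad_fsig :: "real \<Rightarrow> (nat \<Rightarrow> real) \<Rightarrow> nat \<Rightarrow> real" where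
  "grad_fsig \<sigma> x = (\<lambda>l. exp (- x l / \<sigma>) / \<sigma>)"

definition absv :: "(nat \<Rightarrow> real) \<Rightarrow> nat \<Rightarrow> real" where
  "absv x = (\<lambda>l. \<bar>x l\<bar>)"

definition r1 :: "nat \<Rightarrow> nat \<Rightarrow> nat \<Rightarrow> nat \<Rightarrow> nat \<Rightarrow> (nat \<Rightarrow> rmat) \<Rightarrow> (nat \<Rightarrow> rmat) \<Rightarrow> rmat \<Rightarrow> rmat \<Rightarrow> rmat \<Rightarrow> rmat \<Rightarrow> ereal" where
  "r1 n m M l q A B2 B1 C D W =
     (if W \<in> X1 n m M l A B2 B1 then ereal (frob_inner (m + n) (Rmat n q C D) W) else \<infinity>)"

definition Hsig :: "nat \<Rightarrow> nat \<Rightarrow> nat \<Rightarrow> nat \<Rightarrow> nat \<Rightarrow> (nat \<Rightarrow> rmat) \<Rightarrow> (nat \<Rightarrow> rmat) \<Rightarrow> rmat \<Rightarrow> rmat \<Rightarrow> rmat \<Rightarrow> real \<Rightarrow> real \<Rightarrow> rmat \<Rightarrow> ereal" where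
  "Hsig n m M l q A B2 B1 C D \<gamma> \<sigma> W =
     r1 n m M l q A B2 B1 C D W + ereal (\<gamma> * fsig \<sigma> (m * n) (absv (Pop n m W)))"

end

theory Submission
  imports Defs
begin

text \<open>The odd steps do not move \<open>W\<close>. In an even step \<open>y\<close> is the gradient of the concave
function \<open>f\<^sub>\<sigma>\<close> at \<open>|P W|\<close> for the current \<open>W\<close>, so the linearisation of \<open>f\<^sub>\<sigma>\<close> there majorises
\<open>f\<^sub>\<sigma>\<close> and is exact at the current point. Comparing the minimiser with the feasible
current point, and dropping the nonnegative proximal term, shows that the surrogate and
hence \<open>H\<^sub>\<sigma>\<close> does not increase.\<close>

lemma one_minus_exp_le_tangent:
  fixes a b s :: real
  assumes "s > 0"
  shows "1 - exp (- b / s) \<le> (1 - exp (- a / s)) + exp (- a / s) / s * (b - a)"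
proof -
  have "exp (- a / s) * (1 + (a - b) / s) \<le> exp (- a / s) * exp ((a - b) / s)"
    by (intro mult_left_mono exp_ge_add_one_self) auto
  also have "\<dots> = exp (- b / s)"
    by (simp add: exp_add[symmetric] diff_divide_distrib)
  finally have "exp (- a / s) * (1 + (a - b) / s) \<le> exp (- b / s)" .
  moreover have "exp (- a / s) * (1 + (a - b) / s) = exp (- a / s) - exp (- a / s) / s * (b - a)"
    using assms by (simp add: field_simps)
  ultimately show ?thesis by linarith
qed

lemma fsig_le_linearization:
  assumes "\<sigma> > 0"
  shows "fsig \<sigma> k x' \<le> fsig \<sigma> k x + (\<Sum>i<k. grad_fsig \<sigma> x i * (x' i - x i))"
proof -
  have "fsig \<sigma> k x' \<le> (\<Sum>i<k. (1 - exp (- x i / \<sigma>)) + grad_fsig \<sigma> x i * (x' i - x i))"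
    unfolding fsig_def grad_fsig_def by (intro sum_mono one_minus_exp_le_tangent assms)
  then show ?thesis by (simp add: sum.distrib fsig_def)
qed

lemma fsig_majorization_descent:
  fixes \<phi> \<phi>' c \<gamma> \<sigma> :: real
  assumes "\<sigma> > 0" "\<gamma> \<ge> 0" "c \<ge> 0"
    and surrogate_descent:
      "\<phi>' + \<gamma> * (\<Sum>i<k. grad_fsig \<sigma> x i * x' i) + c \<le> \<phi> + \<gamma> * (\<Sum>i<k. grad_fsig \<sigma> x i * x i)"
  shows "\<phi>' + \<gamma> * fsig \<sigma> k x' \<le> \<phi> + \<gamma> * fsig \<sigma> k x"
proof -
  have "fsig \<sigma> k x' \<le> fsig \<sigma> k x
      + ((\<Sum>i<k. grad_fsig \<sigma> x i * x' i) - (\<Sum>i<k. grad_fsig \<sigma> x i * x i))"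
    using fsig_le_linearization[OF \<open>\<sigma> > 0\<close>, of k x' x]
    by (simp add: right_diff_distrib sum_subtractf)
  then have "\<gamma> * fsig \<sigma> k x' \<le> \<gamma> * (fsig \<sigma> k x
      + ((\<Sum>i<k. grad_fsig \<sigma> x i * x' i) - (\<Sum>i<k. grad_fsig \<sigma> x i * x i)))"
    using \<open>\<gamma> \<ge> 0\<close> by (rule mult_left_mono)
  then show ?thesis
    using surrogate_descent \<open>c \<ge> 0\<close> by (simp add: distrib_left right_diff_distrib)
qed

lemma frob_sq_nonneg: "frob_sq p X \<ge> 0"
  unfolding frob_sq_def by (intro sum_nonneg) auto

lemma frob_sq_zero [simp]: "frob_sq p (\<lambda>a b. 0) = 0"
  by (simp add: frob_sq_def)

lemma Hsig_on_X1:
  assumes "W \<in> X1 n m M l A B2 B1"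
  shows "Hsig n m M l q A B2 B1 C D \<gamma> \<sigma> W
    = ereal (frob_inner (m + n) (Rmat n q C D) W + \<gamma> * fsig \<sigma> (m * n) (absv (Pop n m W)))"
  using assms by (simp add: Hsig_def r1_def)

theorem lemma27:
  fixes n m M l q :: nat
    and A B2 :: "nat \<Rightarrow> rmat" and B1 C D :: rmat
    and \<gamma> \<sigma> lam :: real
    and Wt :: "nat \<Rightarrow> rmat" and y :: "nat \<Rightarrow> nat \<Rightarrow> real"
  assumes "1 \<le> n" "1 \<le> m" "1 \<le> M"
    and CD: "\<forall>i<n. \<forall>j<m. mmul q (mtr C) D i j = 0"
    and DD: "pd m (mmul q (mtr D) D)"
    and BB: "pd n (mmul l B1 (mtr B1))"
    and CC: "pd n (mmul q (mtr C) C)"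
    and "\<gamma> > 0" "\<sigma> > 0" "lam > 0"
    and init_W: "Wt 0 \<in> X1 n m M l A B2 B1"
    and init_y: "\<forall>k<m * n. y 0 k \<ge> 0"
    and odd_step: "\<And>r. odd r \<Longrightarrow> Wt r = Wt (r - 1) \<and>
                     y r = grad_fsig \<sigma> (absv (Pop n m (Wt (r - 1))))"
    and even_step: "\<And>r. r \<ge> 1 \<Longrightarrow> even r \<Longrightarrow> y r = y (r - 1) \<and>
                     Wt r \<in> X1 n m M l A B2 B1 \<and>
                     (\<forall>W \<in> X1 n m M l A B2 B1.
                        frob_inner (m + n) (Rmat n q C D) (Wt r)
                          + \<gamma> * (\<Sum>k<m * n. y (r - 1) k * absv (Pop n m (Wt r)) k)
                          + frob_sq (m + n) (\<lambda>a b. Wt r a b - Wt (r - 1) a b) / (2 * lam)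
                        \<le> frob_inner (m + n) (Rmat n q C D) W
                          + \<gamma> * (\<Sum>k<m * n. y (r - 1) k * absv (Pop n m W) k)
                          + frob_sq (m + n) (\<lambda>a b. W a b - Wt (r - 1) a b) / (2 * lam))"
  shows "\<forall>r. Hsig n m M l q A B2 B1 C D \<gamma> \<sigma> (Wt (r + 1)) \<le> Hsig n m M l q A B2 B1 C D \<gamma> \<sigma> (Wt r)"
proof
  fix r
  have feasible: "Wt k \<in> X1 n m M l A B2 B1" for k
  proof (induction k)
    case (Suc k)
    then show ?case using odd_step[of "Suc k"] even_step[of "Suc k"] by (cases "odd (Suc k)") auto
  qed (rule init_W)
  show "Hsig n m M l q A B2 B1 C D \<gamma> \<sigma> (Wt (r + 1)) \<le> Hsig n m M l q A B2 B1 C D \<gamma> \<sigma> (Wt r)"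
  proof (cases "odd r")
    case False
    then show ?thesis using odd_step[of "r + 1"] by simp
  next
    case True
    then have y_grad: "y r = grad_fsig \<sigma> (absv (Pop n m (Wt r)))"
      using odd_step[of r] by simp
    have "r + 1 \<ge> 1" "even (r + 1)" using True by auto
    note W_step = even_step[OF this, THEN conjunct2, THEN conjunct2]
    have "frob_inner (m + n) (Rmat n q C D) (Wt (r + 1))
          + \<gamma> * (\<Sum>k<m * n. y r k * absv (Pop n m (Wt (r + 1))) k)
          + frob_sq (m + n) (\<lambda>a b. Wt (r + 1) a b - Wt r a b) / (2 * lam)
        \<le> frob_inner (m + n) (Rmat n q C D) (Wt r)
          + \<gamma> * (\<Sum>k<m * n. y r k * absv (Pop n m (Wt r)) k)"
      using bspec[OF W_step feasible[of r]] by simp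
    then have "frob_inner (m + n) (Rmat n q C D) (Wt (r + 1)) + \<gamma> * fsig \<sigma> (m * n) (absv (Pop n m (Wt (r + 1))))
        \<le> frob_inner (m + n) (Rmat n q C D) (Wt r) + \<gamma> * fsig \<sigma> (m * n) (absv (Pop n m (Wt r)))"
      unfolding y_grad using \<open>\<sigma> > 0\<close> \<open>\<gamma> > 0\<close> \<open>lam > 0\<close> frob_sq_nonneg
      by (intro fsig_majorization_descent) auto
    then show ?thesis by (simp add: Hsig_on_X1 feasible)
  qed
qed

end
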